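(* Let $G=(G_1,\ldots,G_p):(\mathbb{R}^m,0)\to(\mathbb{R}^p,0)$, $m>p\ge2$, be a real analytic map germ, and suppose that $\det D(x)>0$ for all $x\in M(G)\setminus(V_G\cup\mathrm{Sing}\,G)$ (in a small neighbourhood of $0$). Then $a(x)>0$ for all such $x$. In particular, if $\mathrm{Disc}\,G=\{0\}$, then there exists a Milnor vector field for $G$ on $B^m_\varepsilon\setminus V_G$ for some small $\varepsilon>0$, and $\Psi_G$ is $\rho$-regular.
   Context: $\rho(x)=\|x\|^2$, $V_G=G^{-1}(0)$, $\mathrm{Sing}\,G=\{x:\mathrm{rank}\,JG(x)<p\}$, $\mathrm{Disc}\,G=G(\mathrm{Sing}\,G)$ as a set germ at $0$. $M(G)$ is the germ at $0$ of the closure of the set of points $x$ where $\nabla\rho(x),\nabla G_1(x),\ldots,\nabla G_p(x)$ are linearly dependent. For $x\in M(G)\setminus(V_G\cup\mathrm{Sing}\,G)$, $a(x)$ is the unique real number with $\nabla\rho(x)-a(x)\nabla\|G(x)\|^2\in W(x):=\{\sum_ic_i\nabla G_i(x): c\in\mathbb{R}^p,\ \sum_ic_iG_i(x)=0\}$. On $\{G_1\ne0\}$ (analogously on $\{G_j\ne0\}$ with index $j$ playing the role of $1$), $\Omega_k=G_1\nabla G_k-G_k\nabla G_1$, $k=2,\dots,p$, span $W(x)$, and $D(x)$ is the $p\times p$ matrix whose first column is $(\langle\nabla\rho,\nabla\|G\|^2\rangle,\langle\nabla\rho,\Omega_2\rangle,\ldots,\langle\nabla\rho,\Omega_p\rangle)^t$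 and whose $(i,j)$ entry for $j\ge2$ is $\langle\Omega_j,w_i\rangle$, where $(w_1,\ldots,w_p)=(\nabla\|G\|^2,\Omega_2,\ldots,\Omega_p)$. $\Psi_G=G/\|G\|:U\setminus V_G\to S^{p-1}$. $M(\Psi_G)$ is the germ at $0$ of the closure of the set of $x\in U\setminus V_G$ at which $(\rho,\Psi_G):U\setminus V_G\to\mathbb{R}\times S^{p-1}$ is not a submersion; $\Psi_G$ is $\rho$-regular if $M(\Psi_G)\setminus G^{-1}(\mathrm{Disc}\,G)=\emptyset$. When $\mathrm{Disc}\,G=\{0\}$, a Milnor vector field for $G$ on $B^m_\varepsilon\setminus V_G$ is a vector field $\nu$ such that for every $x\in B^m_\varepsilon\setminus V_G$: $\nu(x)$ is tangent to the fibre $\Psi_G^{-1}(\Psi_G(x))$, $\langle\nu(x),\nabla\rho(x)\rangle>0$, and $\langle\nu(x),\nabla\|G(x)\|^2\rangle>0$. *)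

theory Defs
  imports "HOL-Analysis.Analysis"
begin

definition real_analytic_on :: "(real^'m::finite \<Rightarrow> real) \<Rightarrow> (real^'m) set \<Rightarrow> bool" where
  "real_analytic_on f U \<longleftrightarrow>
     (\<forall>x\<in>U. \<exists>r>0. \<exists>c :: ('m \<Rightarrow> nat) \<Rightarrow> real.
        \<forall>y\<in>ball x r. ((\<lambda>\<alpha>. c \<alpha> * (\<Prod>i\<in>UNIV. (y$i - x$i) ^ \<alpha> i)) has_sum f y) UNIV)"

definition analytic_map_germ :: "(real^'m::finite \<Rightarrow> real^'p::finite) \<Rightarrow> bool" where
  "analytic_map_germ G \<longleftrightarrow> G 0 = 0 \<and>
     (\<exists>U. open U \<and> 0 \<in> U \<and> (\<forall>i. real_analytic_on (\<lambda>y. G y $ i) U))"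

definition rho :: "real^'m::finite \<Rightarrow> real" where
  "rho x = (norm x)^2"

definition grad :: "(real^'m::finite \<Rightarrow> real) \<Rightarrow> real^'m \<Rightarrow> real^'m" where
  "grad f x = (\<chi> j. frechet_derivative f (at x) (axis j 1))"

definition jacobian :: "(real^'m::finite \<Rightarrow> real^'p::finite) \<Rightarrow> real^'m \<Rightarrow> real^'m^'p" where
  "jacobian G x = (\<chi> i. grad (\<lambda>y. G y $ i) x)"

definition V_G :: "(real^'m::finite \<Rightarrow> real^'p::finite) \<Rightarrow> (real^'m) set" where
  "V_G G = G -` {0}"

definition Sing :: "(real^'m::finite \<Rightarrow> real^'p::finite) \<Rightarrow> (real^'m) set" where
  "Sing G = {x. rank (jacobian G x) < CARD('p)}"

definition Disc :: "(real^'m::finite \<Rightarrow> real^'p::finite) \<Rightarrow> real \<Rightarrow> (real^'p) set" where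
  "Disc G r = G ` (Sing G \<inter> ball 0 r)"

text \<open>Disc G = {0} as set germs at 0.\<close>
definition Disc_trivial :: "(real^'m::finite \<Rightarrow> real^'p::finite) \<Rightarrow> bool" where
  "Disc_trivial G \<longleftrightarrow> (\<exists>r>0. Disc G r \<subseteq> {0})"

text \<open>Representative on ball 0 r of M(G): closure of the set where
  grad rho, grad G_1, ..., grad G_p are linearly dependent.\<close>
definition M_G :: "(real^'m::finite \<Rightarrow> real^'p::finite) \<Rightarrow> real \<Rightarrow> (real^'m) set" where
  "M_G G r = closure {x \<in> ball 0 r. \<exists>(c0::real) (c::real^'p). (c0 \<noteq> 0 \<or> c \<noteq> 0) \<and>
      c0 *\<^sub>R grad rho x + (\<Sum>i\<in>UNIV. c $ i *\<^sub>R grad (\<lambda>y. G y $ i) x) = 0}"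

definition normsqG :: "(real^'m::finite \<Rightarrow> real^'p::finite) \<Rightarrow> real^'m \<Rightarrow> real" where
  "normsqG G y = (norm (G y))^2"

definition W_space :: "(real^'m::finite \<Rightarrow> real^'p::finite) \<Rightarrow> real^'m \<Rightarrow> (real^'m) set" where
  "W_space G x = {(\<Sum>i\<in>UNIV. c $ i *\<^sub>R grad (\<lambda>y. G y $ i) x) | c::real^'p.
                    (\<Sum>i\<in>UNIV. c $ i * G x $ i) = 0}"

definition a_fun :: "(real^'m::finite \<Rightarrow> real^'p::finite) \<Rightarrow> real^'m \<Rightarrow> real" where
  "a_fun G x = (THE a. grad rho x - a *\<^sub>R grad (normsqG G) x \<in> W_space G x)"

text \<open>Omega_k = G_j grad G_k - G_k grad G_j, for a chart index j with G_j(x) \<noteq> 0.\<close>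
definition Omega :: "(real^'m::finite \<Rightarrow> real^'p::finite) \<Rightarrow> 'p \<Rightarrow> 'p \<Rightarrow> real^'m \<Rightarrow> real^'m" where
  "Omega G j k x = G x $ j *\<^sub>R grad (\<lambda>y. G y $ k) x - G x $ k *\<^sub>R grad (\<lambda>y. G y $ j) x"

text \<open>The slot j plays the role of the
  index 1 of the paper: w_j = grad ||G||^2 and the j-th column is made of the
  products with grad rho; for k \<noteq> j, w_k = Omega_k and column k has entries
  <Omega_k, w_i>.  This is the paper's matrix up to a simultaneous permutation of
  rows and columns, so the determinant is the same.\<close>
definition D_w :: "(real^'m::finite \<Rightarrow> real^'p::finite) \<Rightarrow> 'p \<Rightarrow> real^'m \<Rightarrow> 'p \<Rightarrow> real^'m" where
  "D_w G j x i = (if i = j then grad (normsqG G) x else Omega G j i x)"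

definition D_mat :: "(real^'m::finite \<Rightarrow> real^'p::finite) \<Rightarrow> 'p \<Rightarrow> real^'m \<Rightarrow> real^'p^'p" where
  "D_mat G j x = (\<chi> i k. if k = j then grad rho x \<bullet> D_w G j x i
                          else Omega G j k x \<bullet> D_w G j x i)"

definition Psi :: "(real^'m::finite \<Rightarrow> real^'p::finite) \<Rightarrow> real^'m \<Rightarrow> real^'p" where
  "Psi G x = (1 / norm (G x)) *\<^sub>R G x"

text \<open>(rho, Psi_G) is not a submersion at x (target R \<times> S^{p-1} has dimension p).\<close>
definition not_submersion_at :: "(real^'m::finite \<Rightarrow> real^'p::finite) \<Rightarrow> real^'m \<Rightarrow> bool" where
  "not_submersion_at G x \<longleftrightarrow>
     dim (range (frechet_derivative (\<lambda>y. (rho y, Psi G y)) (at x))) < CARD('p)"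

definition M_Psi :: "(real^'m::finite \<Rightarrow> real^'p::finite) \<Rightarrow> real \<Rightarrow> (real^'m) set" where
  "M_Psi G r = closure {x \<in> ball 0 r. G x \<noteq> 0 \<and> not_submersion_at G x}"

text \<open>M(Psi_G) \ G^{-1}(Disc G) = \<emptyset> as germs at 0.\<close>
definition rho_regular :: "(real^'m::finite \<Rightarrow> real^'p::finite) \<Rightarrow> bool" where
  "rho_regular G \<longleftrightarrow> (\<exists>r>0. \<forall>x\<in>M_Psi G r \<inter> ball 0 r. G x \<in> Disc G r)"

text \<open>Milnor vector field on B_eps \ V_G (tangency to the fibre of Psi_G = lies in the
  kernel of the derivative of Psi_G); we also require continuity.\<close>
definition milnor_vector_field ::
  "(real^'m::finite \<Rightarrow> real^'p::finite) \<Rightarrow> real \<Rightarrow> (real^'m \<Rightarrow> real^'m) \<Rightarrow> bool" where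
  "milnor_vector_field G eps \<nu> \<longleftrightarrow>
     continuous_on (cball 0 eps - V_G G) \<nu> \<and>
     (\<forall>x \<in> cball 0 eps - V_G G.
        frechet_derivative (Psi G) (at x) (\<nu> x) = 0 \<and>
        \<nu> x \<bullet> grad rho x > 0 \<and>
        \<nu> x \<bullet> grad (normsqG G) x > 0)"

end

theory Submission
  imports Defs
begin

text \<open>Analyticity is used only through the \<open>C\<^sup>1\<close> regularity it gives near \<open>0\<close>.
  Off \<open>Sing G\<close> the Jacobian \<open>J\<close> has full row rank and every \<open>x\<close> splits orthogonally as
  \<open>x = d J + z\<close> with \<open>J z = 0\<close>; points of \<open>M(G)\<close> are exactly those with \<open>z = 0\<close>, a closed
  condition. There \<open>a(x) = \<langle>d, G\<rangle> / \<parallel>G\<parallel>\<^sup>2\<close>, and expanding \<open>2x\<close> in the vectors \<open>w\<^sub>i\<close> shows, by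
  Cramer's rule, that \<open>det D(x)\<close> is \<open>a(x)\<close> times the Gram determinant of the \<open>w\<^sub>i\<close>, which is
  nonnegative; so \<open>det D > 0\<close> forces \<open>a > 0\<close>. If \<open>Disc G = {0}\<close>, then near \<open>0\<close> every point
  off \<open>V\<^sub>G\<close> is regular and \<open>\<nu> = z + \<beta> n\<close>, with \<open>n\<close> the least-norm solution of \<open>J n = G\<close> and a
  suitable continuous \<open>\<beta> > 0\<close>, satisfies \<open>J \<nu> = \<beta> G\<close> and \<open>\<langle>x, \<nu>\<rangle> > 0\<close>: it is a Milnor vector
  field. As \<open>\<nu>\<close> is tangent to the fibre of \<open>\<Psi>\<^sub>G\<close> but transverse to the spheres, and every
  direction tangent to the sphere at \<open>\<Psi>\<^sub>G(x)\<close> is hit through least-norm preimages under \<open>J\<close>,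
  \<open>(\<rho>, \<Psi>\<^sub>G)\<close> is a submersion there.\<close>

section \<open>Multivariate power series\<close>

definition box_multi_indices :: "nat \<Rightarrow> ('m::finite \<Rightarrow> nat) set" where
  "box_multi_indices N = {\<alpha>. \<forall>i. \<alpha> i \<le> N}"

lemma finite_box_multi_indices: "finite (box_multi_indices N :: ('m::finite \<Rightarrow> nat) set)"
proof -
  have box: "box_multi_indices N = PiE (UNIV :: 'm set) (\<lambda>_. {..N})"
    by (auto simp: box_multi_indices_def PiE_UNIV_domain)
  show ?thesis unfolding box by (rule finite_PiE) auto
qed

lemma filterlim_box_multi_indices:
  "filterlim box_multi_indices (finite_subsets_at_top (UNIV :: ('m::finite \<Rightarrow> nat) set)) sequentially"
  unfolding filterlim_finite_subsets_at_top
proof (intro allI impI)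
  fix X :: "('m \<Rightarrow> nat) set" assume "finite X \<and> X \<subseteq> UNIV"
  then have X: "finite X" by simp
  define N where "N = (\<Sum>\<alpha>\<in>X. \<Sum>i\<in>UNIV. \<alpha> i)"
  have bound: "\<alpha> i \<le> N" if "\<alpha> \<in> X" for \<alpha> i
  proof -
    have "\<alpha> i \<le> (\<Sum>i\<in>UNIV. \<alpha> i)" by (rule member_le_sum) auto
    also have "\<dots> \<le> N" unfolding N_def by (rule member_le_sum) (use X that in auto)
    finally show ?thesis .
  qed
  show "\<forall>\<^sub>F n in sequentially. finite (box_multi_indices n) \<and> X \<subseteq> box_multi_indices n
          \<and> box_multi_indices n \<subseteq> UNIV"
    using eventually_ge_at_top[of N]
    by eventually_elim
       (intro conjI finite_box_multi_indices; auto simp: box_multi_indices_def intro: le_trans[OF bound])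
qed

lemma has_sum_imp_box_sums_tendsto:
  assumes "(f has_sum S) UNIV"
  shows "(\<lambda>N. sum f (box_multi_indices N)) \<longlonglongrightarrow> S"
  using filterlim_compose[OF assms[unfolded has_sum_def] filterlim_box_multi_indices]
  by (simp add: o_def)

lemma box_tail_infsum_tendsto_0:
  fixes f :: "('m::finite \<Rightarrow> nat) \<Rightarrow> 'a::banach"
  assumes "f summable_on UNIV"
  shows "(\<lambda>N. infsum f (- box_multi_indices N)) \<longlonglongrightarrow> 0"
proof -
  have tail: "infsum f (- box_multi_indices N) = infsum f UNIV - sum f (box_multi_indices N)" for N
  proof -
    have "infsum f UNIV = infsum f (box_multi_indices N) + infsum f (- box_multi_indices N)"
      using infsum_Un_disjoint[of f "box_multi_indices N" "- box_multi_indices N"]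
        summable_on_subset_banach[OF assms] by (simp add: Un_commute)
    then show ?thesis by (simp add: finite_box_multi_indices)
  qed
  have "(\<lambda>N. infsum f UNIV - sum f (box_multi_indices N)) \<longlonglongrightarrow> infsum f UNIV - infsum f UNIV"
    using assms by (intro tendsto_intros has_sum_imp_box_sums_tendsto) (simp add: has_sum_infsum)
  then show ?thesis by (simp add: tail)
qed

definition monomial :: "('m::finite \<Rightarrow> nat) \<Rightarrow> real^'m \<Rightarrow> real" where
  "monomial \<alpha> y = (\<Prod>i\<in>UNIV. y$i ^ \<alpha> i)"

definition monomial_deriv :: "('m::finite \<Rightarrow> nat) \<Rightarrow> real^'m \<Rightarrow> real^'m \<Rightarrow> real" where
  "monomial_deriv \<alpha> y h =
     (\<Sum>i\<in>UNIV. (of_nat (\<alpha> i) * h$i * y$i ^ (\<alpha> i - 1)) * (\<Prod>j\<in>UNIV-{i}. y$j ^ \<alpha> j))"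

lemma has_derivative_monomial: "(monomial \<alpha> has_derivative monomial_deriv \<alpha> y) (at y within T)"
proof -
  have "((\<lambda>y. y$i ^ \<alpha> i) has_derivative (\<lambda>h. of_nat (\<alpha> i) * h$i * y$i ^ (\<alpha> i - 1))) (at y within T)"
    for i
    using has_derivative_power[OF bounded_linear_imp_has_derivative[OF bounded_linear_vec_nth]] .
  then show ?thesis
    unfolding monomial_def[abs_def] monomial_deriv_def[abs_def] by (rule has_derivative_prod)
qed

lemma of_nat_mult_power_pred_le:
  fixes t s :: real
  assumes "0 \<le> t" "t \<le> s/2" "0 < s"
  shows "of_nat k * t^(k-1) \<le> s^k / s"
proof (cases k)
  case 0 then show ?thesis using assms by simp
next
  case (Suc n)
  have "of_nat k * t^(k-1) \<le> real (Suc n) * (s/2)^n"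
    using Suc assms by (simp add: mult_left_mono power_mono)
  also have "\<dots> = (real (Suc n) / 2^n) * s^n" by (simp add: power_divide)
  also have "\<dots> \<le> 1 * s^n"
  proof (rule mult_right_mono)
    have "real (Suc n) \<le> 2^n" using less_exp[of n] by (metis Suc_leI of_nat_le_iff of_nat_numeral of_nat_power)
    then show "real (Suc n) / 2^n \<le> 1" by simp
  qed (use assms in simp)
  also have "\<dots> = s^k / s" using Suc assms by simp
  finally show ?thesis .
qed

lemma abs_monomial_deriv_le:
  fixes y h :: "real^'m::finite"
  assumes "norm y \<le> s/2" "0 < s"
  shows "\<bar>monomial_deriv \<alpha> y h\<bar> \<le> real CARD('m) / s * (\<Prod>i\<in>UNIV. s ^ \<alpha> i) * norm h"
proof -
  have yj: "\<bar>y$j\<bar> \<le> s/2" for j using component_le_norm_cart[of y j] assms by simp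
  have term_le: "\<bar>(of_nat (\<alpha> i) * h$i * y$i ^ (\<alpha> i - 1)) * (\<Prod>j\<in>UNIV-{i}. y$j ^ \<alpha> j)\<bar>
        \<le> (\<Prod>i\<in>UNIV. s ^ \<alpha> i) / s * norm h" for i
  proof -
    have a: "\<bar>of_nat (\<alpha> i) * y$i ^ (\<alpha> i - 1)\<bar> \<le> s ^ \<alpha> i / s"
      using of_nat_mult_power_pred_le[of "\<bar>y$i\<bar>" s "\<alpha> i"] yj[of i] assms
      by (simp add: abs_mult power_abs)
    have b: "\<bar>\<Prod>j\<in>UNIV-{i}. y$j ^ \<alpha> j\<bar> \<le> (\<Prod>j\<in>UNIV-{i}. s ^ \<alpha> j)"
      unfolding abs_prod
      by (intro prod_mono) (use yj assms in \<open>auto simp: power_abs intro!: power_mono, smt (verit) yj\<close>)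
    have "\<bar>(of_nat (\<alpha> i) * h$i * y$i ^ (\<alpha> i - 1)) * (\<Prod>j\<in>UNIV-{i}. y$j ^ \<alpha> j)\<bar>
        = \<bar>of_nat (\<alpha> i) * y$i ^ (\<alpha> i - 1)\<bar> * \<bar>h$i\<bar> * \<bar>\<Prod>j\<in>UNIV-{i}. y$j ^ \<alpha> j\<bar>"
      by (simp add: abs_mult)
    also have "\<dots> \<le> (s ^ \<alpha> i / s) * norm h * (\<Prod>j\<in>UNIV-{i}. s ^ \<alpha> j)"
      using a b component_le_norm_cart[of h i] assms(2) by (intro mult_mono) (auto simp: prod_nonneg)
    also have "\<dots> = (s ^ \<alpha> i * (\<Prod>j\<in>UNIV-{i}. s ^ \<alpha> j)) / s * norm h" by simp
    also have "s ^ \<alpha> i * (\<Prod>j\<in>UNIV-{i}. s ^ \<alpha> j) = (\<Prod>j\<in>UNIV. s ^ \<alpha> j)"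
      by (metis UNIV_I finite prod.remove)
    finally show ?thesis .
  qed
  have "\<bar>monomial_deriv \<alpha> y h\<bar>
      \<le> (\<Sum>i\<in>UNIV. \<bar>(of_nat (\<alpha> i) * h$i * y$i ^ (\<alpha> i - 1)) * (\<Prod>j\<in>UNIV-{i}. y$j ^ \<alpha> j)\<bar>)"
    unfolding monomial_deriv_def by (rule sum_abs)
  also have "\<dots> \<le> (\<Sum>i\<in>(UNIV::'m set). (\<Prod>i\<in>UNIV. s ^ \<alpha> i) / s * norm h)"
    by (intro sum_mono term_le)
  finally show ?thesis by simp
qed

lemma grad_eqI:
  fixes f :: "real^'m::finite \<Rightarrow> real"
  assumes "(f has_derivative (\<lambda>h. v \<bullet> h)) (at y)"
  shows "grad f y = v"
proof -
  have "frechet_derivative f (at y) = (\<lambda>h. v \<bullet> h)"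
    using frechet_derivative_at[OF assms] by simp
  then show ?thesis by (simp add: grad_def vec_eq_iff inner_axis)
qed

lemma has_derivative_grad:
  fixes f :: "real^'m::finite \<Rightarrow> real"
  assumes f': "(f has_derivative f') (at y)"
  shows "(f has_derivative (\<lambda>h. grad f y \<bullet> h)) (at y)"
proof -
  have lin: "linear f'" using f' has_derivative_linear by blast
  have "f' h = grad f y \<bullet> h" for h
  proof -
    have "f' h = f' (\<Sum>j\<in>UNIV. h$j *\<^sub>R axis j 1)"
      using basis_expansion[of h] by (simp add: scalar_mult_eq_scaleR)
    also have "\<dots> = (\<Sum>j\<in>UNIV. h$j * f' (axis j 1))"
      by (simp add: linear_sum[OF lin] linear_cmul[OF lin])
    also have "\<dots> = grad f y \<bullet> h"
      using frechet_derivative_at[OF f'] by (simp add: grad_def inner_vec_def mult.commute)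
    finally show ?thesis .
  qed
  then have "f' = (\<lambda>h. grad f y \<bullet> h)" by (simp add: fun_eq_iff)
  then show ?thesis using f' by simp
qed

locale dominated_power_series =
  fixes c :: "('m::finite \<Rightarrow> nat) \<Rightarrow> real" and s :: real
  assumes radius_pos: "s > 0"
    and dominated: "(\<lambda>\<alpha>. \<bar>c \<alpha>\<bar> * (\<Prod>i\<in>UNIV. s ^ \<alpha> i)) summable_on UNIV"
begin

definition majorant_tail :: "nat \<Rightarrow> real" where
  "majorant_tail N = infsum (\<lambda>\<alpha>. \<bar>c \<alpha>\<bar> * (\<Prod>i\<in>UNIV. s ^ \<alpha> i)) (- box_multi_indices N)"

definition deriv_series :: "real^'m \<Rightarrow> real^'m \<Rightarrow> real" where
  "deriv_series y h = infsum (\<lambda>\<alpha>. c \<alpha> * monomial_deriv \<alpha> y h) UNIV"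

lemma deriv_term_le_majorant:
  assumes "y \<in> ball 0 (s/2)"
  shows "norm (c \<alpha> * monomial_deriv \<alpha> y h) \<le> CARD('m) / s * norm h * (\<bar>c \<alpha>\<bar> * (\<Prod>i\<in>UNIV. s ^ \<alpha> i))"
proof -
  have "\<bar>c \<alpha>\<bar> * \<bar>monomial_deriv \<alpha> y h\<bar> \<le> \<bar>c \<alpha>\<bar> * (CARD('m) / s * (\<Prod>i\<in>UNIV. s ^ \<alpha> i) * norm h)"
    using assms radius_pos by (intro mult_left_mono abs_monomial_deriv_le) auto
  then show ?thesis by (simp add: abs_mult mult_ac)
qed

lemma scaled_majorant_summable:
  "(\<lambda>\<alpha>. CARD('m) / s * norm h * (\<bar>c \<alpha>\<bar> * (\<Prod>i\<in>UNIV. s ^ \<alpha> i))) summable_on A"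
  using summable_on_cmult_right[OF dominated] by (rule summable_on_subset_banach) simp

lemma deriv_terms_abs_summable:
  assumes "y \<in> ball 0 (s/2)"
  shows "(\<lambda>\<alpha>. norm (c \<alpha> * monomial_deriv \<alpha> y h)) summable_on A"
proof (rule Infinite_Sum.abs_summable_on_comparison_test)
  show "(\<lambda>\<alpha>. norm (CARD('m) / s * norm h * (\<bar>c \<alpha>\<bar> * (\<Prod>i\<in>UNIV. s ^ \<alpha> i)))) summable_on A"
    using scaled_majorant_summable by (rule summable_on_iff_abs_summable_on_real[THEN iffD1])
  show "norm (c \<alpha> * monomial_deriv \<alpha> y h)
          \<le> norm (CARD('m) / s * norm h * (\<bar>c \<alpha>\<bar> * (\<Prod>i\<in>UNIV. s ^ \<alpha> i)))" for \<alpha>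
    using deriv_term_le_majorant[OF assms, of \<alpha> h] by (metis abs_ge_self order_trans real_norm_def)
qed

lemma deriv_partial_sums_error:
  assumes y: "y \<in> ball 0 (s/2)"
  shows "\<bar>(\<Sum>\<alpha>\<in>box_multi_indices N. c \<alpha> * monomial_deriv \<alpha> y h) - deriv_series y h\<bar>
           \<le> CARD('m) / s * norm h * majorant_tail N"
proof -
  let ?t = "\<lambda>\<alpha>. c \<alpha> * monomial_deriv \<alpha> y h"
  have summable: "?t summable_on A" for A
    using deriv_terms_abs_summable[OF y] by (rule summable_on_iff_abs_summable_on_real[THEN iffD2])
  have "deriv_series y h = infsum ?t (box_multi_indices N) + infsum ?t (- box_multi_indices N)"
    unfolding deriv_series_def
    using infsum_Un_disjoint[OF summable summable, of "box_multi_indices N" "- box_multi_indices N"]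
    by (simp add: Un_commute)
  then have "\<bar>(\<Sum>\<alpha>\<in>box_multi_indices N. ?t \<alpha>) - deriv_series y h\<bar> = norm (infsum ?t (- box_multi_indices N))"
    by (simp add: finite_box_multi_indices)
  also have "\<dots> \<le> infsum (\<lambda>\<alpha>. norm (?t \<alpha>)) (- box_multi_indices N)"
    by (rule norm_infsum_bound[OF deriv_terms_abs_summable[OF y]])
  also have "\<dots> \<le> infsum (\<lambda>\<alpha>. CARD('m) / s * norm h * (\<bar>c \<alpha>\<bar> * (\<Prod>i\<in>UNIV. s ^ \<alpha> i)))
                   (- box_multi_indices N)"
    by (intro infsum_mono deriv_terms_abs_summable[OF y] scaled_majorant_summable
          deriv_term_le_majorant[OF y])
  also have "\<dots> = CARD('m) / s * norm h * majorant_tail N"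
    unfolding majorant_tail_def by (rule infsum_cmult_right')
  finally show ?thesis .
qed

lemma deriv_partial_sums_uniformly_close:
  assumes "e > 0"
  shows "\<forall>\<^sub>F N in sequentially. \<forall>y\<in>ball 0 (s/2). \<forall>h.
           \<bar>(\<Sum>\<alpha>\<in>box_multi_indices N. c \<alpha> * monomial_deriv \<alpha> y h) - deriv_series y h\<bar> \<le> e * norm h"
proof -
  have "(\<lambda>N. CARD('m) / s * majorant_tail N) \<longlonglongrightarrow> CARD('m) / s * 0"
    unfolding majorant_tail_def by (intro tendsto_intros box_tail_infsum_tendsto_0 dominated)
  then have "\<forall>\<^sub>F N in sequentially. CARD('m) / s * majorant_tail N < e"
    using assms by (simp add: order_tendstoD(2))
  then show ?thesis
  proof eventually_elim
    case (elim N)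
    show ?case
    proof (intro ballI allI)
      fix y h :: "real^'m" assume "y \<in> ball 0 (s/2)"
      then have "\<bar>(\<Sum>\<alpha>\<in>box_multi_indices N. c \<alpha> * monomial_deriv \<alpha> y h) - deriv_series y h\<bar>
                   \<le> (CARD('m) / s * majorant_tail N) * norm h"
        using deriv_partial_sums_error by (simp add: mult_ac)
      also have "\<dots> \<le> e * norm h" using elim by (intro mult_right_mono) auto
      finally show "\<bar>(\<Sum>\<alpha>\<in>box_multi_indices N. c \<alpha> * monomial_deriv \<alpha> y h) - deriv_series y h\<bar>
                      \<le> e * norm h" .
    qed
  qed
qed

lemma has_derivative_power_series:
  assumes series: "\<And>y. y \<in> ball 0 (s/2) \<Longrightarrow> ((\<lambda>\<alpha>. c \<alpha> * monomial \<alpha> y) has_sum f y) UNIV"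
    and y: "y \<in> ball 0 (s/2)"
  shows "(f has_derivative deriv_series y) (at y)"
proof -
  let ?S = "ball (0::real^'m) (s/2)"
  let ?fN = "\<lambda>N y. \<Sum>\<alpha>\<in>box_multi_indices N. c \<alpha> * monomial \<alpha> y"
  let ?fN' = "\<lambda>N y h. \<Sum>\<alpha>\<in>box_multi_indices N. c \<alpha> * monomial_deriv \<alpha> y h"
  have lim: "(\<lambda>N. ?fN N y) \<longlonglongrightarrow> f y" if "y \<in> ?S" for y
    by (rule has_sum_imp_box_sums_tendsto[OF series[OF that]])
  have "0 \<in> ?S" using radius_pos by simp
  have derN: "(?fN N has_derivative ?fN' N x) (at x within ?S)" for N x
    by (intro has_derivative_sum has_derivative_mult_right has_derivative_monomial)
  have close: "\<forall>\<^sub>F N in sequentially. \<forall>x\<in>?S. \<forall>h. norm (?fN' N x h - deriv_series x h) \<le> e * norm h"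
    if "e > 0" for e
    using deriv_partial_sums_uniformly_close[OF that] by (simp only: real_norm_def)
  obtain g where g: "\<forall>x\<in>?S. (\<lambda>N. ?fN N x) \<longlonglongrightarrow> g x \<and> (g has_derivative deriv_series x) (at x within ?S)"
    using has_derivative_sequence[OF convex_ball derN close \<open>0 \<in> ?S\<close> lim[OF \<open>0 \<in> ?S\<close>]] by blast
  have gf: "g x = f x" if "x \<in> ?S" for x
    using LIMSEQ_unique g lim that by blast
  have "(g has_derivative deriv_series y) (at y within ?S)" using g y by blast
  then have "(f has_derivative deriv_series y) (at y within ?S)"
    by (rule has_derivative_transform_within_open[OF _ open_ball y gf])
  then show ?thesis using at_within_open[OF y] by simp
qed

lemma continuous_on_deriv_series: "continuous_on (ball 0 (s/2)) (\<lambda>y. deriv_series y h)"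
proof (rule uniform_limit_theorem)
  let ?fN' = "\<lambda>N y. \<Sum>\<alpha>\<in>box_multi_indices N. c \<alpha> * monomial_deriv \<alpha> y h"
  show "\<forall>\<^sub>F N in sequentially. continuous_on (ball 0 (s/2)) (?fN' N)"
    unfolding monomial_deriv_def by (intro always_eventually allI continuous_intros)
  show "uniform_limit (ball 0 (s/2)) ?fN' (\<lambda>y. deriv_series y h) sequentially"
    unfolding uniform_limit_iff
  proof (intro allI impI)
    fix e :: real assume "e > 0"
    then have "e / (norm h + 1) > 0" by (simp add: add_nonneg_pos)
    from deriv_partial_sums_uniformly_close[OF this]
    show "\<forall>\<^sub>F N in sequentially. \<forall>y\<in>ball 0 (s/2). dist (?fN' N y) (deriv_series y h) < e"
    proof eventually_elim
      case (elim N)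
      have "e * norm h < e * (norm h + 1)" using \<open>e > 0\<close> by simp
      then have "e / (norm h + 1) * norm h < e"
        by (simp add: pos_divide_less_eq add_nonneg_pos)
      show ?case
      proof
        fix y :: "real^'m" assume "y \<in> ball 0 (s/2)"
        then have "\<bar>?fN' N y - deriv_series y h\<bar> \<le> e / (norm h + 1) * norm h"
          using elim by blast
        then show "dist (?fN' N y) (deriv_series y h) < e"
          using \<open>e / (norm h + 1) * norm h < e\<close> by (simp add: dist_real_def)
      qed
    qed
  qed
qed simp

lemma power_series_C1:
  assumes "\<And>y. y \<in> ball 0 (s/2) \<Longrightarrow> ((\<lambda>\<alpha>. c \<alpha> * monomial \<alpha> y) has_sum f y) UNIV"
  shows "\<forall>y\<in>ball 0 (s/2). (f has_derivative (\<lambda>h. grad f y \<bullet> h)) (at y)"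
    and "continuous_on (ball 0 (s/2)) (grad f)"
proof -
  have f': "(f has_derivative deriv_series y) (at y)" if "y \<in> ball 0 (s/2)" for y
    by (rule has_derivative_power_series[OF assms that])
  then show "\<forall>y\<in>ball 0 (s/2). (f has_derivative (\<lambda>h. grad f y \<bullet> h)) (at y)"
    using has_derivative_grad by blast
  have grad_eq: "(\<chi> j. deriv_series y (axis j 1)) = grad f y" if "y \<in> ball 0 (s/2)" for y
    using frechet_derivative_at[OF f'[OF that]] by (simp add: grad_def)
  have "continuous_on (ball 0 (s/2)) (\<lambda>y. \<chi> j. deriv_series y (axis j 1))"
    by (intro continuous_on_vec_lambda continuous_on_deriv_series)
  then show "continuous_on (ball 0 (s/2)) (grad f)"
    by (rule continuous_on_eq) (simp add: grad_eq)
qed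

end

lemma real_analytic_on_imp_C1:
  fixes f :: "real^'m::finite \<Rightarrow> real"
  assumes "real_analytic_on f U" "0 \<in> U"
  shows "\<exists>r>0. (\<forall>y\<in>ball 0 r. (f has_derivative (\<lambda>h. grad f y \<bullet> h)) (at y))
              \<and> continuous_on (ball 0 r) (grad f)"
proof -
  obtain r c where r: "r > 0"
    and series: "\<And>y. y \<in> ball 0 r \<Longrightarrow> ((\<lambda>\<alpha>. c \<alpha> * monomial \<alpha> y) has_sum f y) UNIV"
    using assms unfolding real_analytic_on_def monomial_def by fastforce
  define s where "s = r / (2 * real CARD('m))"
  have s: "s > 0" using r by (simp add: s_def)
  have "s \<le> r / 2" using r by (simp add: s_def field_simps)
  then have series': "((\<lambda>\<alpha>. c \<alpha> * monomial \<alpha> y) has_sum f y) UNIV" if "y \<in> ball 0 (s/2)" for y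
    using that r by (intro series) auto
  \<comment> \<open>absolute convergence at the corner \<open>(s,\<dots>,s)\<close> of the polydisc gives the majorant\<close>
  define w where "w = ((\<chi> i. s) :: real^'m)"
  have "norm w \<le> real CARD('m) * s"
    using norm_le_l1_cart[of w] s by (simp add: w_def)
  also have "\<dots> < r" using r by (simp add: s_def)
  finally have "(\<lambda>\<alpha>. c \<alpha> * monomial \<alpha> w) summable_on UNIV"
    using series[of w] by (auto simp: summable_on_def)
  then have "(\<lambda>\<alpha>. norm (c \<alpha> * monomial \<alpha> w)) summable_on UNIV"
    by (rule summable_on_iff_abs_summable_on_real[THEN iffD1])
  moreover have "norm (c \<alpha> * monomial \<alpha> w) = \<bar>c \<alpha>\<bar> * (\<Prod>i\<in>UNIV. s ^ \<alpha> i)" for \<alpha>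
    using s by (simp add: monomial_def w_def abs_mult prod_nonneg)
  ultimately interpret dominated_power_series c s
    using s by unfold_locales simp_all
  show ?thesis
    using power_series_C1[OF series'] s by (intro exI[of _ "s/2"]) auto
qed

section \<open>Gram determinants, Cramer's rule and continuity of matrix operations\<close>

lemma det_nz_iff_kernel_trivial:
  fixes A :: "real^'n^'n"
  shows "det A \<noteq> 0 \<longleftrightarrow> (\<forall>c. A *v c = 0 \<longrightarrow> c = 0)"
proof -
  have "det A \<noteq> 0 \<longleftrightarrow> inj ((*v) A)"
    by (simp add: invertible_det_nz[symmetric] invertible_left_inverse matrix_left_invertible_injective)
  also have "\<dots> \<longleftrightarrow> (\<forall>c. A *v c = 0 \<longrightarrow> c = 0)"
    unfolding inj_def by (metis matrix_vector_mult_0_right matrix_vector_mult_diff_distrib right_minus_eq)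
  finally show ?thesis .
qed

lemma inner_gram_matrix:
  fixes J :: "real^'m^'p"
  shows "c \<bullet> ((J ** transpose J) *v c) = (c v* J) \<bullet> (c v* J)"
  by (simp add: matrix_vector_mul_assoc[symmetric] dot_lmul_matrix)

lemma det_gram_matrix_nz_iff:
  fixes J :: "real^'m^'p"
  shows "det (J ** transpose J) \<noteq> 0 \<longleftrightarrow> (\<forall>c. c v* J = 0 \<longrightarrow> c = 0)"
proof -
  have "(J ** transpose J) *v c = 0 \<longleftrightarrow> c v* J = 0" for c
  proof
    assume "(J ** transpose J) *v c = 0"
    then show "c v* J = 0" using inner_gram_matrix[of c J] by simp
  next
    assume "c v* J = 0"
    then show "(J ** transpose J) *v c = 0"
      by (simp add: matrix_vector_mul_assoc[symmetric])
  qed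
  then show ?thesis by (simp add: det_nz_iff_kernel_trivial)
qed

lemma continuous_on_det:
  fixes A :: "'a::topological_space \<Rightarrow> real^'n^'n"
  assumes "continuous_on S A"
  shows "continuous_on S (\<lambda>x. det (A x))"
  unfolding det_def by (intro continuous_intros assms)

lemma psd_det_nonneg:
  fixes M :: "real^'n^'n"
  assumes psd: "\<And>c. 0 \<le> c \<bullet> (M *v c)"
  shows "0 \<le> det M"
proof (rule ccontr)
  assume neg: "\<not> 0 \<le> det M"
  \<comment> \<open>\<open>K s\<close> is positive definite for \<open>s < 1\<close> and \<open>det (K 0) = 1\<close>, so by the intermediate value
      theorem \<open>det M < 0\<close> would force a singular \<open>K s\<close> with \<open>s < 1\<close>\<close>
  define K where "K s = s *\<^sub>R M + (1 - s) *\<^sub>R (mat 1 :: real^'n^'n)" for s :: real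
  have "continuous_on {0..1} (\<lambda>s. det (K s))"
    unfolding K_def by (intro continuous_on_det continuous_intros)
  then obtain s where s: "0 \<le> s" "s \<le> 1" "det (K s) = 0"
    using IVT2'[of "\<lambda>s. det (K s)" 1 0 0] neg by (auto simp: K_def)
  have "s \<noteq> 1" using s neg by (auto simp: K_def)
  with s have s1: "s < 1" by simp
  have "c = 0" if "K s *v c = 0" for c
  proof -
    have "K s *v c = s *\<^sub>R (M *v c) + (1 - s) *\<^sub>R c"
      by (simp add: K_def matrix_vector_mult_add_rdistrib scaleR_matrix_vector_assoc[symmetric])
    then have "s * (c \<bullet> (M *v c)) + (1 - s) * (c \<bullet> c) = 0"
      using that by (metis inner_add_right inner_scaleR_right inner_zero_right)
    then have "(1 - s) * (c \<bullet> c) \<le> 0" using psd[of c] s by (smt (verit) mult_nonneg_nonneg)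
    then have "c \<bullet> c \<le> 0" using s1 by (simp add: mult_le_0_iff)
    then show "c = 0" by (metis antisym inner_ge_zero inner_eq_zero_iff)
  qed
  then show False using s det_nz_iff_kernel_trivial by blast
qed

lemma det_gram_matrix_nonneg:
  fixes J :: "real^'m^'p"
  shows "0 \<le> det (J ** transpose J)"
  by (rule psd_det_nonneg) (simp add: inner_gram_matrix)

definition cramer_solve :: "real^'n^'n \<Rightarrow> real^'n \<Rightarrow> real^'n" where
  "cramer_solve A b = (\<chi> k. det (\<chi> i j. if j = k then b$i else A$i$j) / det A)"

lemma matrix_vector_mult_cramer_solve: "det A \<noteq> 0 \<Longrightarrow> A *v cramer_solve A b = b"
  unfolding cramer_solve_def using cramer by blast

lemma continuous_on_cramer_solve:
  fixes A :: "'a::topological_space \<Rightarrow> real^'n^'n"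
  assumes "continuous_on S A" "continuous_on S b" "\<And>x. x \<in> S \<Longrightarrow> det (A x) \<noteq> 0"
  shows "continuous_on S (\<lambda>x. cramer_solve (A x) (b x))"
proof -
  have "continuous_on S (\<lambda>x. if j = k then b x $ i else A x $ i $ j)" for i j k
    using assms by (cases "j = k") (auto intro!: continuous_on_component)
  then show ?thesis
    unfolding cramer_solve_def using assms
    by (intro continuous_on_vec_lambda continuous_on_divide continuous_on_det) auto
qed

lemma continuous_on_matrix_mult:
  fixes A :: "'a::topological_space \<Rightarrow> real^'n^'m" and B :: "'a \<Rightarrow> real^'k^'n"
  assumes "continuous_on S A" "continuous_on S B"
  shows "continuous_on S (\<lambda>x. A x ** B x)"
  unfolding matrix_matrix_mult_def by (intro continuous_intros assms)

lemma continuous_on_transpose: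
  fixes A :: "'a::topological_space \<Rightarrow> real^'n^'m"
  assumes "continuous_on S A"
  shows "continuous_on S (\<lambda>x. transpose (A x))"
  unfolding transpose_def by (intro continuous_intros assms)

lemma continuous_on_matrix_vector_mult:
  fixes A :: "'a::topological_space \<Rightarrow> real^'n^'m"
  assumes "continuous_on S A" "continuous_on S b"
  shows "continuous_on S (\<lambda>x. A x *v b x)"
  unfolding matrix_vector_mult_def by (intro continuous_intros assms)

lemma continuous_on_vector_matrix_mult:
  fixes A :: "'a::topological_space \<Rightarrow> real^'n^'m"
  assumes "continuous_on S A" "continuous_on S b"
  shows "continuous_on S (\<lambda>x. b x v* A x)"
  unfolding vector_matrix_mult_def by (intro continuous_intros assms)

lemma vector_matrix_mult_scaleR: "(a *\<^sub>R u) v* (J::real^'m^'p) = a *\<^sub>R (u v* J)"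
  by (simp add: vector_matrix_mult_def vec_eq_iff sum_distrib_left algebra_simps)

lemma vector_matrix_mult_sum: "(\<Sum>l\<in>S. f l) v* (J::real^'m^'p) = (\<Sum>l\<in>S. f l v* J)"
  by (induction S rule: infinite_finite_induct) (auto simp: vector_matrix_left_distrib)

section \<open>Orthogonal decomposition along the row space\<close>

text \<open>When \<open>J\<close> has full row rank, \<open>y = row_coeffs J y v* J + row_orth J y\<close> is the orthogonal
  splitting of \<open>y\<close> along the row space of \<open>J\<close>, and \<open>least_norm_solution J g\<close> is the solution
  of \<open>J *v n = g\<close> lying in that row space.\<close>
definition row_coeffs :: "real^'m::finite^'p::finite \<Rightarrow> real^'m \<Rightarrow> real^'p" where
  "row_coeffs J y = cramer_solve (J ** transpose J) (J *v y)"

definition row_orth :: "real^'m::finite^'p::finite \<Rightarrow> real^'m \<Rightarrow> real^'m" where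
  "row_orth J y = y - row_coeffs J y v* J"

definition least_norm_solution :: "real^'m::finite^'p::finite \<Rightarrow> real^'p \<Rightarrow> real^'m" where
  "least_norm_solution J g = cramer_solve (J ** transpose J) g v* J"

lemma matrix_vector_mult_row_space:
  fixes J :: "real^'m^'p"
  shows "J *v (u v* J) = (J ** transpose J) *v u"
  by (simp add: matrix_vector_mul_assoc[symmetric])

locale full_row_rank =
  fixes J :: "real^'m::finite^'p::finite"
  assumes det_gram_nz: "det (J ** transpose J) \<noteq> 0"
begin

lemma vector_matrix_mult_eq_0_iff: "u v* J = 0 \<longleftrightarrow> u = 0"
  using det_gram_nz det_gram_matrix_nz_iff by auto

lemma gram_mult_row_coeffs: "(J ** transpose J) *v row_coeffs J y = J *v y"
  unfolding row_coeffs_def by (rule matrix_vector_mult_cramer_solve[OF det_gram_nz])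

lemma matrix_vector_mult_row_orth: "J *v row_orth J y = 0"
  by (simp add: row_orth_def matrix_vector_mult_diff_distrib matrix_vector_mult_row_space
      gram_mult_row_coeffs)

lemma inner_row_space_row_orth: "(u v* J) \<bullet> row_orth J y = 0"
  by (simp add: dot_lmul_matrix matrix_vector_mult_row_orth)

lemma inner_row_orth: "y \<bullet> row_orth J y = row_orth J y \<bullet> row_orth J y"
proof -
  have "y = row_orth J y + row_coeffs J y v* J" by (simp add: row_orth_def)
  then have "y \<bullet> row_orth J y = (row_orth J y + row_coeffs J y v* J) \<bullet> row_orth J y" by simp
  also have "\<dots> = row_orth J y \<bullet> row_orth J y" by (simp add: inner_add_left inner_row_space_row_orth)
  finally show ?thesis .
qed

lemma row_orth_eq_0_iff: "row_orth J y = 0 \<longleftrightarrow> (\<exists>u. y = u v* J)"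
proof
  assume "\<exists>u. y = u v* J"
  then have "y \<bullet> row_orth J y = 0" using inner_row_space_row_orth by auto
  then show "row_orth J y = 0" by (simp add: inner_row_orth)
qed (auto simp: row_orth_def)

lemma row_orth_eq_0_if_dependent:
  assumes nontrivial: "c0 \<noteq> 0 \<or> c \<noteq> 0" and dep: "c0 *\<^sub>R y + c v* J = 0"
  shows "row_orth J y = 0"
proof (cases "c0 = 0")
  case True
  then show ?thesis using assms vector_matrix_mult_eq_0_iff by simp
next
  case False
  have "c0 *\<^sub>R y = - (c v* J)" using dep by (simp add: eq_neg_iff_add_eq_0)
  have "y = (1 / c0) *\<^sub>R (c0 *\<^sub>R y)" using False by simp
  also have "\<dots> = (- (1 / c0) *\<^sub>R c) v* J"
    using \<open>c0 *\<^sub>R y = - (c v* J)\<close> vector_matrix_mult_scaleR[of "- (1 / c0)" c J] by simp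
  finally have "y = (- (1 / c0) *\<^sub>R c) v* J" .
  then show ?thesis using row_orth_eq_0_iff by blast
qed

lemma matrix_vector_mult_least_norm_solution: "J *v least_norm_solution J g = g"
  by (simp add: least_norm_solution_def matrix_vector_mult_row_space
      matrix_vector_mult_cramer_solve[OF det_gram_nz])

lemma inner_least_norm_solution_row_orth: "least_norm_solution J g \<bullet> row_orth J y = 0"
  unfolding least_norm_solution_def by (rule inner_row_space_row_orth)

lemma inner_least_norm_solution_row_space: "least_norm_solution J g \<bullet> (u v* J) = u \<bullet> g"
  by (simp add: inner_commute[of _ "u v* J"] dot_lmul_matrix matrix_vector_mult_least_norm_solution)

lemma row_space_coeff_unique:
  assumes g: "g \<noteq> 0" and y: "row_orth J y = 0"
  shows "(\<exists>e. e \<bullet> g = 0 \<and> y - a *\<^sub>R (g v* J) = e v* J)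
           \<longleftrightarrow> a = (row_coeffs J y \<bullet> g) / (g \<bullet> g)"
proof -
  define d where "d = row_coeffs J y"
  have yd: "y = d v* J" using y by (simp add: row_orth_def d_def)
  have gg: "g \<bullet> g \<noteq> 0" using g by simp
  have "y - a *\<^sub>R (g v* J) = e v* J \<longleftrightarrow> e = d - a *\<^sub>R g" for e
  proof -
    have "y - a *\<^sub>R (g v* J) - e v* J = (d - a *\<^sub>R g - e) v* J"
      by (simp add: yd vector_matrix_mult_diff_distrib vector_matrix_mult_scaleR)
    then show ?thesis
      using vector_matrix_mult_eq_0_iff[of "d - a *\<^sub>R g - e"] by (auto simp: algebra_simps)
  qed
  then have "(\<exists>e. e \<bullet> g = 0 \<and> y - a *\<^sub>R (g v* J) = e v* J) \<longleftrightarrow> (d - a *\<^sub>R g) \<bullet> g = 0"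
    by auto
  also have "\<dots> \<longleftrightarrow> a = (d \<bullet> g) / (g \<bullet> g)"
    using gg by (auto simp: inner_diff_left field_simps)
  finally show ?thesis by (simp add: d_def)
qed

end

text \<open>The coefficient is chosen so that \<open>y \<bullet> milnor_field J y g = |z|\<^sup>2 + \<beta> t\<close> is positive,
  where \<open>z = row_orth J y\<close> and \<open>t = least_norm_solution J g \<bullet> y\<close>: for \<open>t \<ge> 0\<close> one of the two
  summands is positive, for \<open>t < 0\<close> we have \<open>\<beta> |t| < |z|\<^sup>2\<close>.\<close>
definition milnor_coeff :: "real^'m::finite^'p::finite \<Rightarrow> real^'m \<Rightarrow> real^'p \<Rightarrow> real" where
  "milnor_coeff J y g =
     (row_orth J y \<bullet> row_orth J y) / (1 + \<bar>least_norm_solution J g \<bullet> y\<bar>)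
     + (max (least_norm_solution J g \<bullet> y) 0)^2"

definition milnor_field :: "real^'m::finite^'p::finite \<Rightarrow> real^'m \<Rightarrow> real^'p \<Rightarrow> real^'m" where
  "milnor_field J y g = row_orth J y + milnor_coeff J y g *\<^sub>R least_norm_solution J g"

context full_row_rank
begin

lemma milnor_field:
  assumes row_space: "row_orth J y = 0 \<Longrightarrow> 0 < row_coeffs J y \<bullet> g"
  shows "J *v milnor_field J y g = milnor_coeff J y g *\<^sub>R g"
    and "0 < milnor_coeff J y g"
    and "0 < y \<bullet> milnor_field J y g"
proof -
  show "J *v milnor_field J y g = milnor_coeff J y g *\<^sub>R g"
    by (simp add: milnor_field_def matrix_vector_right_distrib matrix_vector_mult_scaleR
        matrix_vector_mult_row_orth matrix_vector_mult_least_norm_solution)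
  define z where "z = row_orth J y"
  define t where "t = least_norm_solution J g \<bullet> y"
  have coeff: "milnor_coeff J y g = (z \<bullet> z) / (1 + \<bar>t\<bar>) + (max t 0)^2"
    by (simp add: milnor_coeff_def z_def t_def)
  have t_pos: "0 < t" if "z = 0"
  proof -
    have "y = row_coeffs J y v* J" using that by (simp add: z_def row_orth_def)
    then have "t = row_coeffs J y \<bullet> g"
      unfolding t_def using inner_least_norm_solution_row_space by metis
    then show ?thesis using row_space that by (simp add: z_def)
  qed
  show coeff_pos: "0 < milnor_coeff J y g"
  proof (cases "z = 0")
    case True then show ?thesis using t_pos coeff by simp
  next
    case False
    then have "0 < (z \<bullet> z) / (1 + \<bar>t\<bar>)" by (simp add: add_pos_nonneg)
    then show ?thesis using coeff by (smt (verit) zero_le_power2)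
  qed
  have inner_field: "y \<bullet> milnor_field J y g = z \<bullet> z + milnor_coeff J y g * t"
    using inner_row_orth[of y] inner_least_norm_solution_row_orth[of g y]
    by (simp add: milnor_field_def inner_add_right z_def t_def inner_commute)
  show "0 < y \<bullet> milnor_field J y g"
  proof (cases "t \<ge> 0")
    case True
    then show ?thesis
      using inner_field coeff_pos t_pos by (cases "z = 0") (auto intro: add_pos_nonneg)
  next
    case False
    then have "z \<noteq> 0" using t_pos by force
    then have "(z \<bullet> z) * \<bar>t\<bar> < (z \<bullet> z) * (1 + \<bar>t\<bar>)" by simp
    then have "(z \<bullet> z) / (1 + \<bar>t\<bar>) * \<bar>t\<bar> < z \<bullet> z"
      by (simp add: divide_less_eq add_pos_nonneg mult.commute)
    then show ?thesis using inner_field coeff False by simp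
  qed
qed

end

section \<open>The matrix \<open>D\<close>\<close>

lemma det_gram_vectors_nonneg:
  fixes w :: "'p::finite \<Rightarrow> real^'m::finite"
  shows "0 \<le> det ((\<chi> i l. w i \<bullet> w l) :: real^'p^'p)"
proof -
  have "(\<chi> i l. w i \<bullet> w l) = (\<chi> i. w i) ** transpose ((\<chi> i. w i) :: real^'m^'p)"
    by (simp add: matrix_matrix_mult_def transpose_def vec_eq_iff inner_vec_def)
  then show ?thesis using det_gram_matrix_nonneg by metis
qed

text \<open>In the chart \<open>j\<close>, the vectors \<open>w\<^sub>l\<close> spanning the rows of \<open>D(x)\<close> are
  \<open>D_basis_coeffs (G x) j l v* J\<close> with \<open>J\<close> the Jacobian: \<open>grad \<parallel>G\<parallel>\<^sup>2 = 2 G(x) v* J\<close> and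
  \<open>\<Omega>\<^sub>l = (G\<^sub>j e\<^sub>l - G\<^sub>l e\<^sub>j) v* J\<close>.\<close>
definition D_basis_coeffs :: "real^'p::finite \<Rightarrow> 'p \<Rightarrow> 'p \<Rightarrow> real^'p" where
  "D_basis_coeffs g j l = (if l = j then 2 *\<^sub>R g else g$j *\<^sub>R axis l 1 - g$l *\<^sub>R axis j 1)"

lemma sum_D_basis_coeffs:
  fixes g e :: "real^'p::finite"
  assumes gj: "g$j \<noteq> 0" and eg: "e \<bullet> g = 0"
  shows "(\<Sum>l\<in>UNIV. (if l = j then a else e$l / g$j) *\<^sub>R D_basis_coeffs g j l) = (2 * a) *\<^sub>R g + e"
proof -
  let ?\<beta> = "\<lambda>l. if l = j then a else e$l / g$j"
  have eg_off: "(\<Sum>l\<in>UNIV - {j}. e$l * g$l) = - e$j * g$j"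
    using eg sum.remove[of UNIV j "\<lambda>l. e$l * g$l"] by (simp add: inner_vec_def)
  have split: "(\<Sum>l\<in>UNIV. ?\<beta> l *\<^sub>R D_basis_coeffs g j l)
      = (2 * a) *\<^sub>R g + (\<Sum>l\<in>UNIV - {j}. (e$l / g$j) *\<^sub>R (g$j *\<^sub>R axis l 1 - g$l *\<^sub>R axis j 1))"
  proof -
    have "(\<Sum>l\<in>UNIV. ?\<beta> l *\<^sub>R D_basis_coeffs g j l)
        = ?\<beta> j *\<^sub>R D_basis_coeffs g j j + (\<Sum>l\<in>UNIV - {j}. ?\<beta> l *\<^sub>R D_basis_coeffs g j l)"
      by (rule sum.remove) auto
    also have "(\<Sum>l\<in>UNIV - {j}. ?\<beta> l *\<^sub>R D_basis_coeffs g j l)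
        = (\<Sum>l\<in>UNIV - {j}. (e$l / g$j) *\<^sub>R (g$j *\<^sub>R axis l 1 - g$l *\<^sub>R axis j 1))"
      by (rule sum.cong) (auto simp: D_basis_coeffs_def)
    finally show ?thesis by (simp add: D_basis_coeffs_def)
  qed
  show ?thesis
  proof (subst vec_eq_iff, intro allI)
    fix i
    have "(\<Sum>l\<in>UNIV. ?\<beta> l *\<^sub>R D_basis_coeffs g j l) $ i = 2 * a * g$i
        + (\<Sum>l\<in>UNIV - {j}. (e$l / g$j) * (g$j * (if l = i then 1 else 0) - g$l * (if j = i then 1 else 0)))"
      unfolding split by (auto simp: sum_component axis_def eq_commute[of i] intro!: sum.cong)
    also have "\<dots> = 2 * a * g$i + e$i"
    proof (cases "i = j")
      case True
      have "(\<Sum>l\<in>UNIV - {j}. (e$l / g$j) * (g$j * (if l = i then 1 else 0) - g$l * (if j = i then 1 else 0)))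
          = - (\<Sum>l\<in>UNIV - {j}. e$l * g$l) / g$j"
      proof -
        have "(\<Sum>l\<in>UNIV - {j}. (e$l / g$j) * (g$j * (if l = i then 1 else 0) - g$l * (if j = i then 1 else 0)))
            = (\<Sum>l\<in>UNIV - {j}. - (e$l * g$l) / g$j)"
          using True by (intro sum.cong) auto
        then show ?thesis by (simp add: sum_divide_distrib sum_negf)
      qed
      then show ?thesis using True eg_off gj by simp
    next
      case False
      have "(\<Sum>l\<in>UNIV - {j}. (e$l / g$j) * (g$j * (if l = i then 1 else 0) - g$l * (if j = i then 1 else 0)))
          = (\<Sum>l\<in>UNIV - {j}. if l = i then e$i else 0)"
        using False gj by (intro sum.cong) auto
      then show ?thesis using False by (simp add: sum.delta)
    qed
    finally show "(\<Sum>l\<in>UNIV. ?\<beta> l *\<^sub>R D_basis_coeffs g j l) $ i = ((2 * a) *\<^sub>R g + e) $ i"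
      by simp
  qed
qed

text \<open>Writing \<open>2x = \<Sum>\<^sub>l \<beta>\<^sub>l w\<^sub>l\<close>, the bordered column of the matrix is the Gram matrix applied to \<open>\<beta>\<close>,
  so Cramer's rule turns its determinant into \<open>\<beta>\<^sub>j\<close> times the Gram determinant.\<close>
lemma det_D_form:
  fixes J :: "real^'m::finite^'p::finite" and g d :: "real^'p" and x :: "real^'m"
  assumes x: "x = d v* J" and gj: "g$j \<noteq> 0"
  defines "w \<equiv> \<lambda>l. D_basis_coeffs g j l v* J"
  shows "det (\<chi> i k. if k = j then (2 *\<^sub>R x) \<bullet> w i else w k \<bullet> w i)
           = ((d \<bullet> g) / (g \<bullet> g)) * det (\<chi> i l. w i \<bullet> w l)"
proof -
  define a where "a = (d \<bullet> g) / (g \<bullet> g)"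
  define e where "e = 2 *\<^sub>R d - (2 * a) *\<^sub>R g"
  define \<beta> where "\<beta> = (\<chi> l. if l = j then a else e$l / g$j)"
  define \<Gamma> where "\<Gamma> = (\<chi> i l. w i \<bullet> w l)"
  have "e \<bullet> g = 0" using gj by (auto simp: e_def a_def inner_diff_left)
  then have "(\<Sum>l\<in>UNIV. \<beta>$l *\<^sub>R D_basis_coeffs g j l) = 2 *\<^sub>R d"
    using sum_D_basis_coeffs[OF gj, of e a] by (simp add: \<beta>_def e_def)
  then have "2 *\<^sub>R x = (\<Sum>l\<in>UNIV. \<beta>$l *\<^sub>R D_basis_coeffs g j l) v* J"
    by (simp add: x vector_matrix_mult_scaleR)
  also have "\<dots> = (\<Sum>l\<in>UNIV. \<beta>$l *\<^sub>R w l)"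
    by (simp add: vector_matrix_mult_sum vector_matrix_mult_scaleR w_def)
  finally have two_x: "2 *\<^sub>R x = (\<Sum>l\<in>UNIV. \<beta>$l *\<^sub>R w l)" .
  have column: "(2 *\<^sub>R x) \<bullet> w i = (\<Gamma> *v \<beta>) $ i" for i
    by (simp add: two_x \<Gamma>_def inner_sum_left matrix_vector_mult_def inner_commute[of "w i"] mult.commute)
  have "(\<chi> i k. if k = j then (2 *\<^sub>R x) \<bullet> w i else w k \<bullet> w i)
        = (\<chi> i k. if k = j then (\<Gamma> *v \<beta>)$i else \<Gamma>$i$k)"
    unfolding column by (simp add: vec_eq_iff \<Gamma>_def inner_commute)
  also have "det \<dots> = \<beta>$j * det \<Gamma>" by (rule cramer_lemma)
  finally show ?thesis by (simp add: \<beta>_def a_def \<Gamma>_def)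
qed

text \<open>\<open>L\<close> is the derivative of \<open>(\<rho>, G/\<parallel>G\<parallel>)\<close> at a point where \<open>G\<close> has Jacobian \<open>J\<close> and value \<open>g\<close>.
  Its image contains \<open>(t, u)\<close> for all \<open>t\<close> and all \<open>u \<bottom> g\<close>: \<open>u\<close> comes from a least-norm
  preimage and \<open>t\<close> is adjusted along \<open>\<nu>\<close>, which lies in the kernel of the second component.\<close>
lemma dim_range_rho_Psi_deriv:
  fixes J :: "real^'m::finite^'p::finite" and y \<nu> :: "real^'m" and g :: "real^'p"
  assumes "full_row_rank J" and g0: "g \<noteq> 0"
    and J\<nu>: "J *v \<nu> = \<beta> *\<^sub>R g" and y\<nu>: "0 < y \<bullet> \<nu>"
  defines "L \<equiv> \<lambda>h. ((2 *\<^sub>R y) \<bullet> h, (1 / norm g) *\<^sub>R (J *v h) - ((g \<bullet> (J *v h)) / norm g ^ 3) *\<^sub>R g)"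
  shows "CARD('p) \<le> dim (range L)"
proof -
  interpret full_row_rank J by fact
  have ng: "norm g > 0" using g0 by simp
  have linL: "linear L"
    unfolding L_def
    by (rule linearI) (simp_all add: inner_add_right matrix_vector_right_distrib add_divide_distrib
        scaleR_add_left matrix_vector_mult_scaleR scaleR_diff_right algebra_simps)
  define T where "T c = (c \<bullet> g, c - ((c \<bullet> g) / (g \<bullet> g)) *\<^sub>R g)" for c :: "real^'p"
  have linT: "linear T"
    unfolding T_def
    by (rule linearI) (simp_all add: inner_add_left add_divide_distrib scaleR_add_left scaleR_diff_right)
  have injT: "inj T" by (rule injI) (auto simp: T_def)
  have "range T \<subseteq> range L"
  proof (rule image_subsetI)
    fix c :: "real^'p"
    define u where "u = c - ((c \<bullet> g) / (g \<bullet> g)) *\<^sub>R g"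
    have ug: "g \<bullet> u = 0" using g0 by (simp add: u_def inner_diff_right inner_commute)
    define h where "h = least_norm_solution J (norm g *\<^sub>R u)"
    have Lh: "L h = ((2 *\<^sub>R y) \<bullet> h, u)"
      using ng by (simp add: L_def h_def matrix_vector_mult_least_norm_solution ug)
    have L\<nu>: "L \<nu> = ((2 *\<^sub>R y) \<bullet> \<nu>, 0)"
      using ng by (simp add: L_def J\<nu> power2_norm_eq_inner[symmetric] power2_eq_square power3_eq_cube)
    define t where "t = (c \<bullet> g - (2 *\<^sub>R y) \<bullet> h) / ((2 *\<^sub>R y) \<bullet> \<nu>)"
    have "L (h + t *\<^sub>R \<nu>) = L h + t *\<^sub>R L \<nu>"
      by (simp add: linear_add[OF linL] linear_cmul[OF linL])
    also have "\<dots> = T c" using y\<nu> by (simp add: Lh L\<nu> T_def u_def t_def)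
    finally show "T c \<in> range L" by (metis rangeI)
  qed
  then have "dim (range T) \<le> dim (range L)" by (rule dim_subset)
  moreover have "dim (range T) = CARD('p)"
    using dim_image_eq[OF linT, of UNIV] injT by (simp add: inj_on_def inj_def)
  ultimately show ?thesis by simp
qed

section \<open>Derivatives of \<open>\<rho>\<close>, \<open>G\<close> and \<open>\<Psi>\<^sub>G\<close>\<close>

lemma has_derivative_rho:
  fixes y :: "real^'m::finite"
  shows "(rho has_derivative (\<lambda>h. (2 *\<^sub>R y) \<bullet> h)) (at y)"
proof -
  have "(rho :: real^'m \<Rightarrow> real) = (\<lambda>y. y \<bullet> y)" by (auto simp: rho_def power2_norm_eq_inner)
  moreover have "((\<lambda>y. y \<bullet> y) has_derivative (\<lambda>h. (2 *\<^sub>R y) \<bullet> h)) (at y)"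
    by (auto intro!: derivative_eq_intros simp: inner_commute)
  ultimately show ?thesis by simp
qed

lemma grad_rho: "grad rho y = 2 *\<^sub>R y"
  by (rule grad_eqI[OF has_derivative_rho])

lemma vector_matrix_mult_jacobian:
  "c v* jacobian G y = (\<Sum>i\<in>UNIV. c$i *\<^sub>R grad (\<lambda>y. G y $ i) y)"
  by (simp add: vector_matrix_mult_def jacobian_def vec_eq_iff sum_component mult.commute)

lemma matrix_vector_mult_jacobian_nth: "(jacobian G y *v h) $ i = grad (\<lambda>y. G y $ i) y \<bullet> h"
  by (simp add: matrix_vector_mult_def jacobian_def inner_vec_def)

lemma grad_component_eq: "grad (\<lambda>y. G y $ k) x = axis k 1 v* jacobian G x"
  unfolding vector_matrix_mult_jacobian
  by (simp add: axis_def if_distrib[of "\<lambda>a. a *\<^sub>R _"] sum.delta cong: if_cong)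

lemma W_space_eq: "W_space G y = {c v* jacobian G y | c. c \<bullet> G y = 0}"
  unfolding W_space_def vector_matrix_mult_jacobian by (simp add: inner_vec_def)

lemma has_derivative_jacobian:
  assumes "\<And>i. ((\<lambda>y. G y $ i) has_derivative (\<lambda>h. grad (\<lambda>y. G y $ i) y \<bullet> h)) (at y)"
  shows "(G has_derivative (\<lambda>h. jacobian G y *v h)) (at y)"
proof -
  have "((\<lambda>x. G x \<bullet> b) has_derivative (\<lambda>h. (jacobian G y *v h) \<bullet> b)) (at y)" if "b \<in> Basis" for b
  proof -
    obtain i where b: "b = axis i 1" using \<open>b \<in> Basis\<close> by (auto simp: Basis_vec_def)
    show ?thesis using assms[of i] by (simp add: b inner_axis matrix_vector_mult_jacobian_nth)
  qed
  then show ?thesis using has_derivative_componentwise_within by blast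
qed

lemma grad_normsqG:
  assumes "\<And>i. ((\<lambda>y. G y $ i) has_derivative (\<lambda>h. grad (\<lambda>y. G y $ i) y \<bullet> h)) (at y)"
  shows "grad (normsqG G) y = 2 *\<^sub>R (G y v* jacobian G y)"
proof (rule grad_eqI)
  have "normsqG G = (\<lambda>y. G y \<bullet> G y)" by (auto simp: normsqG_def power2_norm_eq_inner)
  moreover have "G y \<bullet> (jacobian G y *v h) + (jacobian G y *v h) \<bullet> G y
                   = 2 * ((G y v* jacobian G y) \<bullet> h)" for h
    by (simp add: inner_commute[of "jacobian G y *v h"] dot_lmul_matrix)
  ultimately show "(normsqG G has_derivative (\<lambda>h. (2 *\<^sub>R (G y v* jacobian G y)) \<bullet> h)) (at y)"
    using has_derivative_jacobian[OF assms] by (auto intro!: derivative_eq_intros)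
qed

definition Psi_deriv :: "(real^'m::finite \<Rightarrow> real^'p::finite) \<Rightarrow> real^'m \<Rightarrow> real^'m \<Rightarrow> real^'p" where
  "Psi_deriv G y h = (1 / norm (G y)) *\<^sub>R (jacobian G y *v h)
      - ((G y \<bullet> (jacobian G y *v h)) / norm (G y) ^ 3) *\<^sub>R G y"

lemma has_derivative_Psi:
  assumes "\<And>i. ((\<lambda>y. G y $ i) has_derivative (\<lambda>h. grad (\<lambda>y. G y $ i) y \<bullet> h)) (at y)"
    and "G y \<noteq> 0"
  shows "(Psi G has_derivative Psi_deriv G y) (at y)"
proof -
  have norm': "((\<lambda>x. norm (G x)) has_derivative (\<lambda>h. (jacobian G y *v h) \<bullet> sgn (G y))) (at y)"
    using has_derivative_compose[OF has_derivative_jacobian[OF assms(1)] has_derivative_norm[OF assms(2)]]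
    by simp
  have "(jacobian G y *v h) \<bullet> sgn (G y) / (norm (G y) * norm (G y))
          = G y \<bullet> (jacobian G y *v h) / norm (G y) ^ 3" for h
    using assms(2) by (simp add: sgn_div_norm inner_commute power3_eq_cube field_simps)
  then show ?thesis
    using has_derivative_jacobian[OF assms(1)] assms(2) unfolding Psi_def[abs_def] Psi_deriv_def[abs_def]
    by (auto intro!: derivative_eq_intros norm')
qed

lemma Psi_deriv_radial:
  assumes "jacobian G y *v v = b *\<^sub>R G y" "G y \<noteq> 0"
  shows "Psi_deriv G y v = 0"
proof -
  have "G y \<bullet> G y = (norm (G y))^2" by (simp add: power2_norm_eq_inner)
  then show ?thesis
    using assms by (simp add: Psi_deriv_def power2_eq_square power3_eq_cube)
qed

lemma full_row_rank_jacobian: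
  assumes "x \<notin> Sing G"
  shows "full_row_rank (jacobian G x)"
proof
  have "rank (transpose (jacobian G x)) = CARD('b)"
    using assms rank_bound[of "jacobian G x"] by (simp add: Sing_def rank_transpose)
  then have "inj ((*v) (transpose (jacobian G x)))" using full_rank_injective by blast
  then have "c v* jacobian G x = 0 \<Longrightarrow> c = 0" for c
    by (metis injD transpose_matrix_vector matrix_vector_mult_0_right)
  then show "det (jacobian G x ** transpose (jacobian G x)) \<noteq> 0"
    using det_gram_matrix_nz_iff by blast
qed

lemma M_G_mono: "r \<le> r' \<Longrightarrow> M_G G r \<subseteq> M_G G r'"
  unfolding M_G_def by (intro closure_mono) auto

lemma mem_M_G_if_row_orth_eq_0:
  assumes "y \<in> ball 0 r" "row_orth (jacobian G y) y = 0"
  shows "y \<in> M_G G r"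
proof -
  let ?d = "row_coeffs (jacobian G y) y"
  have "(\<Sum>i\<in>UNIV. (- 2 *\<^sub>R ?d) $ i *\<^sub>R grad (\<lambda>y. G y $ i) y) = - 2 *\<^sub>R (?d v* jacobian G y)"
    by (simp only: vector_matrix_mult_jacobian[symmetric] vector_matrix_mult_scaleR)
  then have zero: "1 *\<^sub>R grad rho y + (\<Sum>i\<in>UNIV. (- 2 *\<^sub>R ?d) $ i *\<^sub>R grad (\<lambda>y. G y $ i) y) = 0"
    using assms(2) by (simp add: grad_rho row_orth_def scaleR_diff_right)
  have "\<exists>(c0::real) c. (c0 \<noteq> 0 \<or> c \<noteq> 0) \<and>
               c0 *\<^sub>R grad rho y + (\<Sum>i\<in>UNIV. c $ i *\<^sub>R grad (\<lambda>y. G y $ i) y) = 0"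
  proof (intro exI conjI)
    show "(1::real) \<noteq> 0 \<or> - 2 *\<^sub>R ?d \<noteq> 0" by simp
  qed (rule zero)
  with assms(1) show ?thesis
    unfolding M_G_def by (intro closure_subset[THEN subsetD] CollectI conjI)
qed

section \<open>Germs that are \<open>C\<^sup>1\<close> near the origin\<close>

locale C1_near_0 =
  fixes G :: "real^'m::finite \<Rightarrow> real^'p::finite" and r0 :: real
  assumes radius_pos: "r0 > 0"
    and has_derivative_component:
      "\<And>i y. y \<in> ball 0 r0 \<Longrightarrow> ((\<lambda>y. G y $ i) has_derivative (\<lambda>h. grad (\<lambda>y. G y $ i) y \<bullet> h)) (at y)"
    and continuous_on_grad_component: "\<And>i. continuous_on (ball 0 r0) (grad (\<lambda>y. G y $ i))"

definition milnor_admissible :: "(real^'m::finite \<Rightarrow> real^'p::finite) \<Rightarrow> real^'m \<Rightarrow> bool" where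
  "milnor_admissible G y \<longleftrightarrow> y \<notin> Sing G \<and>
     (row_orth (jacobian G y) y = 0 \<longrightarrow> 0 < row_coeffs (jacobian G y) y \<bullet> G y)"

lemma analytic_map_germ_imp_C1_near_0:
  assumes "analytic_map_germ G"
  shows "\<exists>r0. C1_near_0 G r0"
proof -
  obtain U where U: "0 \<in> U" "\<And>i. real_analytic_on (\<lambda>y. G y $ i) U"
    using assms unfolding analytic_map_germ_def by blast
  have "\<forall>i. \<exists>r>0. (\<forall>y\<in>ball 0 r. ((\<lambda>y. G y $ i) has_derivative (\<lambda>h. grad (\<lambda>y. G y $ i) y \<bullet> h)) (at y))
              \<and> continuous_on (ball 0 r) (grad (\<lambda>y. G y $ i))"
    using real_analytic_on_imp_C1[OF U(2) U(1)] by blast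
  then obtain R where R: "\<And>i. R i > 0"
    "\<And>i y. y \<in> ball 0 (R i) \<Longrightarrow> ((\<lambda>y. G y $ i) has_derivative (\<lambda>h. grad (\<lambda>y. G y $ i) y \<bullet> h)) (at y)"
    "\<And>i. continuous_on (ball 0 (R i)) (grad (\<lambda>y. G y $ i))"
    by metis
  define r0 where "r0 = Min (range R)"
  have "r0 > 0" unfolding r0_def using R(1) by (simp add: Min_gr_iff)
  moreover have sub: "ball 0 r0 \<subseteq> ball 0 (R i)" for i
    unfolding r0_def by (intro subset_ball Min_le) auto
  ultimately have "C1_near_0 G r0"
    using R(2) sub continuous_on_subset[OF R(3) sub] by unfold_locales blast+
  then show ?thesis ..
qed

context C1_near_0
begin

lemma has_derivative_G: "y \<in> ball 0 r0 \<Longrightarrow> (G has_derivative (\<lambda>h. jacobian G y *v h)) (at y)"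
  by (intro has_derivative_jacobian has_derivative_component)

lemma continuous_on_G: "continuous_on (ball 0 r0) G"
  using has_derivative_G has_derivative_continuous continuous_at_imp_continuous_on by blast

lemma continuous_on_jacobian: "continuous_on (ball 0 r0) (jacobian G)"
  unfolding jacobian_def[abs_def] by (intro continuous_on_vec_lambda continuous_on_grad_component)

definition regular_ball :: "(real^'m) set" where
  "regular_ball = {y \<in> ball 0 r0. det (jacobian G y ** transpose (jacobian G y)) \<noteq> 0}"

lemma regular_ball_subset: "regular_ball \<subseteq> ball 0 r0"
  by (auto simp: regular_ball_def)

lemma regular_ballI: "y \<in> ball 0 r0 \<Longrightarrow> y \<notin> Sing G \<Longrightarrow> y \<in> regular_ball"
  using full_row_rank_jacobian full_row_rank.det_gram_nz by (fastforce simp: regular_ball_def)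

lemma continuous_on_gram_jacobian:
  "continuous_on (ball 0 r0) (\<lambda>y. jacobian G y ** transpose (jacobian G y))"
  by (intro continuous_on_matrix_mult continuous_on_transpose continuous_on_jacobian)

lemma open_regular_ball: "open regular_ball"
proof -
  have "open ((\<lambda>y. det (jacobian G y ** transpose (jacobian G y))) -` (- {0}) \<inter> ball 0 r0)"
    using continuous_on_open_vimage[OF open_ball] continuous_on_det[OF continuous_on_gram_jacobian]
    by blast
  moreover have "(\<lambda>y. det (jacobian G y ** transpose (jacobian G y))) -` (- {0}) \<inter> ball 0 r0
                   = regular_ball"
    by (auto simp: regular_ball_def)
  ultimately show ?thesis by simp
qed

lemma continuous_on_cramer_solve_gram:
  assumes "continuous_on regular_ball b"
  shows "continuous_on regular_ball (\<lambda>y. cramer_solve (jacobian G y ** transpose (jacobian G y)) (b y))"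
proof (rule continuous_on_cramer_solve[OF _ assms])
  show "continuous_on regular_ball (\<lambda>y. jacobian G y ** transpose (jacobian G y))"
    by (rule continuous_on_subset[OF continuous_on_gram_jacobian regular_ball_subset])
qed (simp add: regular_ball_def)

lemma continuous_on_row_orth: "continuous_on regular_ball (\<lambda>y. row_orth (jacobian G y) y)"
proof -
  have J: "continuous_on regular_ball (jacobian G)"
    by (rule continuous_on_subset[OF continuous_on_jacobian regular_ball_subset])
  show ?thesis
    unfolding row_orth_def row_coeffs_def
    by (intro continuous_intros continuous_on_vector_matrix_mult J continuous_on_cramer_solve_gram
        continuous_on_matrix_vector_mult)
qed

lemma continuous_on_milnor_field:
  "continuous_on regular_ball (\<lambda>y. milnor_field (jacobian G y) y (G y))"
proof -
  have J: "continuous_on regular_ball (jacobian G)"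
    by (rule continuous_on_subset[OF continuous_on_jacobian regular_ball_subset])
  have G: "continuous_on regular_ball G"
    by (rule continuous_on_subset[OF continuous_on_G regular_ball_subset])
  have n: "continuous_on regular_ball (\<lambda>y. least_norm_solution (jacobian G y) (G y))"
    unfolding least_norm_solution_def
    by (intro continuous_on_vector_matrix_mult J continuous_on_cramer_solve_gram G)
  show ?thesis
    unfolding milnor_field_def milnor_coeff_def
    by (intro continuous_intros continuous_on_row_orth n) (auto simp: add_pos_nonneg)
qed

text \<open>Off \<open>Sing G\<close>, dependence of \<open>grad \<rho>\<close> on the \<open>grad G\<^sub>i\<close> means \<open>row_orth = 0\<close>; since
  \<open>row_orth\<close> is continuous there, this survives in the closure defining \<open>M(G)\<close>.\<close>
lemma row_orth_jacobian_eq_0_on_M_G: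
  assumes x: "x \<in> ball 0 r0" "x \<notin> Sing G" "x \<in> M_G G r"
  shows "row_orth (jacobian G x) x = 0"
proof (rule ccontr)
  assume nz: "row_orth (jacobian G x) x \<noteq> 0"
  define U where "U = (\<lambda>y. row_orth (jacobian G y) y) -` (- {0}) \<inter> regular_ball"
  have "open U"
    unfolding U_def using continuous_on_open_vimage[OF open_regular_ball] continuous_on_row_orth
    by blast
  have "x \<in> U" using x nz regular_ballI by (simp add: U_def)
  have "y \<notin> U" if "c0 \<noteq> 0 \<or> c \<noteq> 0"
    "c0 *\<^sub>R grad rho y + (\<Sum>i\<in>UNIV. c $ i *\<^sub>R grad (\<lambda>y. G y $ i) y) = 0" for y c0 c
  proof
    assume "y \<in> U"
    then interpret full_row_rank "jacobian G y" by unfold_locales (simp add: U_def regular_ball_def)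
    have "(2 * c0) *\<^sub>R y + c v* jacobian G y = 0"
      using that(2) by (simp add: grad_rho vector_matrix_mult_jacobian mult.commute)
    then have "row_orth (jacobian G y) y = 0"
      using that(1) by (intro row_orth_eq_0_if_dependent[of "2 * c0" c]) auto
    with \<open>y \<in> U\<close> show False by (simp add: U_def)
  qed
  then have "U \<inter> closure {x \<in> ball 0 r. \<exists>(c0::real) (c::real^'p). (c0 \<noteq> 0 \<or> c \<noteq> 0) \<and>
      c0 *\<^sub>R grad rho x + (\<Sum>i\<in>UNIV. c $ i *\<^sub>R grad (\<lambda>y. G y $ i) x) = 0} = {}"
    using open_Int_closure_eq_empty[OF \<open>open U\<close>] by blast
  then show False using \<open>x \<in> U\<close> x(3) by (auto simp: M_G_def)
qed

lemma a_fun_eq: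
  assumes x: "x \<in> ball 0 r0" "x \<notin> Sing G" "G x \<noteq> 0" "row_orth (jacobian G x) x = 0"
  shows "a_fun G x = (row_coeffs (jacobian G x) x \<bullet> G x) / (G x \<bullet> G x)"
proof -
  let ?J = "jacobian G x" and ?g = "G x"
  interpret full_row_rank ?J using full_row_rank_jacobian x(2) .
  have halve: "(\<exists>e. e \<bullet> ?g = 0 \<and> 2 *\<^sub>R v = e v* ?J) \<longleftrightarrow> (\<exists>e. e \<bullet> ?g = 0 \<and> v = e v* ?J)" for v
  proof
    assume "\<exists>e. e \<bullet> ?g = 0 \<and> 2 *\<^sub>R v = e v* ?J"
    then obtain e where e: "e \<bullet> ?g = 0" "2 *\<^sub>R v = e v* ?J" by blast
    have "v = (1/2) *\<^sub>R (2 *\<^sub>R v)" by simp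
    also have "\<dots> = ((1/2) *\<^sub>R e) v* ?J" by (simp only: e(2) vector_matrix_mult_scaleR)
    finally show "\<exists>e. e \<bullet> ?g = 0 \<and> v = e v* ?J" using e(1) by (intro exI[of _ "(1/2) *\<^sub>R e"]) simp
  next
    assume "\<exists>e. e \<bullet> ?g = 0 \<and> v = e v* ?J"
    then obtain e where e: "e \<bullet> ?g = 0" "v = e v* ?J" by blast
    then show "\<exists>e. e \<bullet> ?g = 0 \<and> 2 *\<^sub>R v = e v* ?J"
      by (intro exI[of _ "2 *\<^sub>R e"]) (simp add: vector_matrix_mult_scaleR)
  qed
  have W: "v \<in> W_space G x \<longleftrightarrow> (\<exists>e. e \<bullet> ?g = 0 \<and> v = e v* ?J)" for v
    unfolding W_space_eq by blast
  have grads: "grad rho x - a *\<^sub>R grad (normsqG G) x = 2 *\<^sub>R (x - a *\<^sub>R (?g v* ?J))" for a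
    by (simp add: grad_rho grad_normsqG[OF has_derivative_component[OF x(1)]] scaleR_diff_right)
  have "grad rho x - a *\<^sub>R grad (normsqG G) x \<in> W_space G x
        \<longleftrightarrow> (\<exists>e. e \<bullet> ?g = 0 \<and> x - a *\<^sub>R (?g v* ?J) = e v* ?J)" for a
    by (simp only: W grads halve)
  then show ?thesis
    unfolding a_fun_def using row_space_coeff_unique[OF x(3,4)] by simp
qed

lemma D_mat_eq:
  fixes j :: 'p
  assumes "x \<in> ball 0 r0"
  defines "w \<equiv> \<lambda>l. D_basis_coeffs (G x) j l v* jacobian G x"
  shows "D_mat G j x = (\<chi> i k. if k = j then (2 *\<^sub>R x) \<bullet> w i else w k \<bullet> w i)"
proof -
  have D_w: "D_w G j x i = w i" for i
    using grad_normsqG[OF has_derivative_component[OF assms(1)]]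
    by (simp add: D_w_def Omega_def w_def D_basis_coeffs_def vector_matrix_mult_scaleR
        vector_matrix_mult_diff_distrib grad_component_eq)
  moreover have Omega: "Omega G j k x = w k" if "k \<noteq> j" for k
    using that by (simp add: Omega_def w_def D_basis_coeffs_def vector_matrix_mult_scaleR
        vector_matrix_mult_diff_distrib grad_component_eq)
  ultimately show ?thesis by (simp add: D_mat_def grad_rho cong: if_cong)
qed

lemma a_fun_pos:
  assumes x: "x \<in> ball 0 r0" "x \<notin> Sing G" "x \<in> M_G G r"
    and j: "G x $ j \<noteq> 0" and det_pos: "det (D_mat G j x) > 0"
  shows "a_fun G x > 0"
proof -
  let ?J = "jacobian G x"
  define w where "w l = D_basis_coeffs (G x) j l v* ?J" for l
  have "G x \<noteq> 0" using j by auto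
  have orth: "row_orth ?J x = 0" by (rule row_orth_jacobian_eq_0_on_M_G[OF x])
  then have "x = row_coeffs ?J x v* ?J" by (simp add: row_orth_def)
  from det_D_form[OF this j]
  have "det (D_mat G j x) = a_fun G x * det ((\<chi> i l. w i \<bullet> w l) :: real^'p^'p)"
    unfolding D_mat_eq[OF x(1)] a_fun_eq[OF x(1,2) \<open>G x \<noteq> 0\<close> orth] w_def .
  with det_pos det_gram_vectors_nonneg[of w] show ?thesis
    by (metis less_eq_real_def mult_nonpos_nonneg not_less)
qed

lemma milnor_admissibleI:
  assumes y: "y \<in> ball 0 r0" "y \<notin> Sing G" "G y \<noteq> 0"
    and a_pos: "row_orth (jacobian G y) y = 0 \<Longrightarrow> a_fun G y > 0"
  shows "milnor_admissible G y"
proof -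
  have gg: "0 < G y \<bullet> G y" using y(3) by simp
  have "0 < row_coeffs (jacobian G y) y \<bullet> G y" if orth: "row_orth (jacobian G y) y = 0"
  proof -
    have "row_coeffs (jacobian G y) y \<bullet> G y = a_fun G y * (G y \<bullet> G y)"
      using a_fun_eq[OF y orth] gg by simp
    then show ?thesis using a_pos[OF orth] gg by simp
  qed
  then show ?thesis using y(2) by (simp add: milnor_admissible_def)
qed

lemma a_fun_pos_near_0:
  assumes "r \<le> r0"
    and detD: "\<forall>x \<in> ball 0 r \<inter> M_G G r - (V_G G \<union> Sing G). \<exists>j. G x $ j \<noteq> 0 \<and> det (D_mat G j x) > 0"
    and x: "x \<in> ball 0 r \<inter> M_G G r - (V_G G \<union> Sing G)"
  shows "a_fun G x > 0"
proof -
  obtain j where "G x $ j \<noteq> 0" "det (D_mat G j x) > 0" using detD x by blast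
  moreover have "x \<in> ball 0 r0" using x assms(1) by auto
  ultimately show ?thesis using a_fun_pos x by blast
qed

lemma milnor_admissible_near_0:
  assumes "r \<le> r0" and Disc: "Disc G r' \<subseteq> {0}"
    and a_pos: "\<And>x. x \<in> ball 0 r \<inter> M_G G r - (V_G G \<union> Sing G) \<Longrightarrow> a_fun G x > 0"
    and y: "y \<in> ball 0 r" "y \<in> ball 0 r'" "G y \<noteq> 0"
  shows "milnor_admissible G y"
proof (rule milnor_admissibleI)
  show "y \<in> ball 0 r0" using y(1) assms(1) by auto
  show "y \<notin> Sing G" using Disc y unfolding Disc_def by blast
  then show "a_fun G y > 0" if "row_orth (jacobian G y) y = 0"
    using a_pos mem_M_G_if_row_orth_eq_0[OF y(1) that] y by (simp add: V_G_def)
qed (rule y(3))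

lemma milnor_vector_field:
  assumes eps: "eps < r0"
    and adm: "\<And>y. y \<in> cball 0 eps \<Longrightarrow> G y \<noteq> 0 \<Longrightarrow> milnor_admissible G y"
  shows "milnor_vector_field G eps (\<lambda>y. milnor_field (jacobian G y) y (G y))"
  unfolding milnor_vector_field_def
proof (intro conjI ballI)
  have "cball 0 eps - V_G G \<subseteq> regular_ball"
    using adm eps by (auto intro!: regular_ballI simp: V_G_def milnor_admissible_def)
  then show "continuous_on (cball 0 eps - V_G G) (\<lambda>y. milnor_field (jacobian G y) y (G y))"
    by (rule continuous_on_subset[OF continuous_on_milnor_field])
  fix x assume x: "x \<in> cball 0 eps - V_G G"
  then have x0: "x \<in> ball 0 r0" and Gx: "G x \<noteq> 0" using eps by (auto simp: V_G_def)
  interpret full_row_rank "jacobian G x"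
    using adm x Gx full_row_rank_jacobian by (auto simp: milnor_admissible_def)
  note field = milnor_field[of x "G x"]
  have row_space: "row_orth (jacobian G x) x = 0 \<Longrightarrow> 0 < row_coeffs (jacobian G x) x \<bullet> G x"
    using adm x Gx by (auto simp: milnor_admissible_def)
  show "frechet_derivative (Psi G) (at x) (milnor_field (jacobian G x) x (G x)) = 0"
    using frechet_derivative_at[OF has_derivative_Psi[OF has_derivative_component[OF x0] Gx]]
      Psi_deriv_radial[OF field(1)[OF row_space] Gx] by simp
  show "milnor_field (jacobian G x) x (G x) \<bullet> grad rho x > 0"
    using field(3)[OF row_space] by (simp add: grad_rho inner_commute)
  have "milnor_field (jacobian G x) x (G x) \<bullet> grad (normsqG G) x
          = 2 * milnor_coeff (jacobian G x) x (G x) * (G x \<bullet> G x)"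
    using field(1)[OF row_space]
    by (simp add: grad_normsqG[OF has_derivative_component[OF x0]] inner_commute dot_lmul_matrix)
  then show "milnor_field (jacobian G x) x (G x) \<bullet> grad (normsqG G) x > 0"
    using field(2)[OF row_space] Gx by simp
qed

lemma M_Psi_eq_empty:
  assumes "r \<le> r0" and adm: "\<And>y. y \<in> ball 0 r \<Longrightarrow> G y \<noteq> 0 \<Longrightarrow> milnor_admissible G y"
  shows "M_Psi G r = {}"
proof -
  have "\<not> not_submersion_at G x" if x: "x \<in> ball 0 r" "G x \<noteq> 0" for x
  proof -
    have x0: "x \<in> ball 0 r0" using x assms(1) by auto
    interpret full_row_rank "jacobian G x"
      using adm x full_row_rank_jacobian by (auto simp: milnor_admissible_def)
    have row_space: "row_orth (jacobian G x) x = 0 \<Longrightarrow> 0 < row_coeffs (jacobian G x) x \<bullet> G x"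
      using adm x by (auto simp: milnor_admissible_def)
    note field = milnor_field[OF row_space]
    have "((\<lambda>y. (rho y, Psi G y)) has_derivative (\<lambda>h. ((2 *\<^sub>R x) \<bullet> h, Psi_deriv G x h))) (at x)"
      using has_derivative_rho has_derivative_Psi[OF has_derivative_component[OF x0] x(2)]
      by (rule has_derivative_Pair)
    then have "frechet_derivative (\<lambda>y. (rho y, Psi G y)) (at x) = (\<lambda>h. ((2 *\<^sub>R x) \<bullet> h, Psi_deriv G x h))"
      by (simp add: frechet_derivative_at[symmetric])
    moreover have "CARD('p) \<le> dim (range (\<lambda>h. ((2 *\<^sub>R x) \<bullet> h, Psi_deriv G x h)))"
      unfolding Psi_deriv_def
      by (rule dim_range_rho_Psi_deriv[OF full_row_rank_axioms x(2) field(1) field(3)])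
    ultimately show ?thesis by (simp add: not_submersion_at_def)
  qed
  then show ?thesis by (auto simp: M_Psi_def)
qed

lemma milnor_vector_field_and_rho_regular:
  assumes "0 < r" "r \<le> r0" and adm: "\<And>y. y \<in> ball 0 r \<Longrightarrow> G y \<noteq> 0 \<Longrightarrow> milnor_admissible G y"
  shows "(\<exists>eps>0. \<exists>\<nu>. milnor_vector_field G eps \<nu>) \<and> rho_regular G"
proof
  have "milnor_vector_field G (r/2) (\<lambda>y. milnor_field (jacobian G y) y (G y))"
    using assms by (intro milnor_vector_field) auto
  then show "\<exists>eps>0. \<exists>\<nu>. milnor_vector_field G eps \<nu>" using \<open>0 < r\<close> by (intro exI[of _ "r/2"]) auto
  have "M_Psi G r = {}" using \<open>r \<le> r0\<close> adm by (rule M_Psi_eq_empty)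
  then show "rho_regular G" using \<open>0 < r\<close> unfolding rho_regular_def by blast
qed

end

theorem theorem4p3:
  fixes G :: "real^'m::finite \<Rightarrow> real^'p::finite"
  assumes dims: "CARD('m) > CARD('p)" "CARD('p) \<ge> 2"
    and analytic: "analytic_map_germ G"
    and detD: "\<exists>r>0. \<forall>x \<in> ball 0 r \<inter> M_G G r - (V_G G \<union> Sing G).
                   \<exists>j. G x $ j \<noteq> 0 \<and> det (D_mat G j x) > 0"
  shows "(\<exists>r>0. \<forall>x \<in> ball 0 r \<inter> M_G G r - (V_G G \<union> Sing G). a_fun G x > 0)
         \<and> (Disc_trivial G \<longrightarrow>
              (\<exists>eps>0. \<exists>\<nu>. milnor_vector_field G eps \<nu>) \<and> rho_regular G)"
proof -
  obtain r0 where "C1_near_0 G r0" using analytic_map_germ_imp_C1_near_0[OF analytic] by blast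
  then interpret C1_near_0 G r0 .
  obtain rD where "rD > 0" and detD_rD:
    "\<forall>x \<in> ball 0 rD \<inter> M_G G rD - (V_G G \<union> Sing G). \<exists>j. G x $ j \<noteq> 0 \<and> det (D_mat G j x) > 0"
    using detD by blast
  define r where "r = min r0 rD"
  have r: "r > 0" "r \<le> r0" using radius_pos \<open>rD > 0\<close> by (auto simp: r_def)
  have "ball 0 r \<inter> M_G G r \<subseteq> ball 0 rD \<inter> M_G G rD"
    using M_G_mono[of r rD] by (auto simp: r_def)
  then have a_pos: "\<And>x. x \<in> ball 0 r \<inter> M_G G r - (V_G G \<union> Sing G) \<Longrightarrow> a_fun G x > 0"
    using a_fun_pos_near_0[OF r(2)] detD_rD by blast
  moreover have "(\<exists>eps>0. \<exists>\<nu>. milnor_vector_field G eps \<nu>) \<and> rho_regular G" if "Disc_trivial G"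
  proof -
    obtain r' where "r' > 0" "Disc G r' \<subseteq> {0}"
      using \<open>Disc_trivial G\<close> unfolding Disc_trivial_def by blast
    then show ?thesis
      using milnor_admissible_near_0[OF r(2) _ a_pos] r
      by (intro milnor_vector_field_and_rho_regular[of "min r r'"]) auto
  qed
  ultimately show ?thesis using r(1) by blast
qed

end
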